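(* For every $n \geq 1$, every $p=(p_1,\ldots,p_n) \in (0,1)^n$ with $p_1 + \cdots + p_n \leq 1$ and every integer $k \geq 0$, $$\Pr\{T_{n,n}(p) > k\} \geq \Pr\{T_{n,n}(v) > k\} \geq \Pr\{T_{n,n}(u) > k\},$$ where $p_0 = 1 - (p_1 + \cdots + p_n)$, $v=(v_1,\ldots,v_n)$ with $v_i = (1-p_0)/n$, and $u=(1/n,\ldots,1/n)$.
   Context: For a vector $q=(q_1,\ldots,q_n)$ of nonnegative reals with $q_1+\cdots+q_n\le 1$, let $q_0 = 1-(q_1+\cdots+q_n)$; coupons are drawn independently, one at each time $1,2,\ldots$, from $\{0,1,\ldots,n\}$, coupon $i$ with probability $q_i$, and coupon $0$ never belongs to the collection. $T_{n,n}(q)$ is the number of draws needed until all $n$ coupons $1,\ldots,n$ have been drawn at least once. *)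

theory Defs
  imports "HOL-Probability.Probability"
begin

text \<open>Coupon probabilities are given as a function q :: nat => real; only q 1, ..., q n
  are used. Coupon 0 has probability q_0 = 1 - (q 1 + ... + q n).\<close>

definition coupon_weight :: "nat \<Rightarrow> (nat \<Rightarrow> real) \<Rightarrow> nat \<Rightarrow> real" where
  "coupon_weight n q i = (if i = 0 then 1 - (\<Sum>j\<in>{1..n}. q j) else if i \<le> n then q i else 0)"

definition coupon_pmf :: "nat \<Rightarrow> (nat \<Rightarrow> real) \<Rightarrow> nat pmf" where
  "coupon_pmf n q = embed_pmf (coupon_weight n q)"

text \<open>Independent draws at times 1,2,...: element i of the stream is the draw at time i+1.\<close>
definition draws :: "nat \<Rightarrow> (nat \<Rightarrow> real) \<Rightarrow> nat stream measure" where
  "draws n q = stream_space (measure_pmf (coupon_pmf n q))"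

definition T_nn :: "nat \<Rightarrow> nat stream \<Rightarrow> enat" where
  "T_nn n \<omega> = (if \<exists>t. {1..n} \<subseteq> set (stake t \<omega>)
                 then enat (LEAST t. {1..n} \<subseteq> set (stake t \<omega>)) else \<infinity>)"

end

theory Submission
  imports Defs "HOL-Computational_Algebra.Formal_Power_Series"
begin

(* Conditioning on the first draw shows that the probability that
   k independent draws from a distribution q on a finite set U cover R \<subseteq> U
   satisfies the same recursion in k as
     k! [x^k]  exp(q(U-R) x) \<Prod>_{r\<in>R} (exp(q_r x) - 1),
   since differentiating this series removes one element from R; hence the two
   coincide.  For the coupon model (U = {0..n}, R = {1..n}) the tail probability
   Pr{T > k} is therefore 1 minus k! times the k-th coefficient of
     Z_q = exp(q_0 x) \<Prod>_{i=1..n} (exp(q_i x) - 1),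
   so both inequalities reduce to coefficientwise inequalities between such series:
   (1) equalising: replacing q_1..q_n by their mean (q_0 fixed) can only increase
       the coefficients; by pairwise smoothing steps, each moving one argument
       onto the mean, \<Prod>(e^{a x}-1) grows coefficientwise;
   (2) filling: moving the mass of coupon 0 evenly onto the others only increases
       coefficients, since e^{c x}(e^{a x}-1) \<le> e^{(a+c) x}-1 coefficientwise. *)

(* The coefficient notation f $ k of power series clashes with vector indexing. *)
no_notation vec_nth (infixl "$" 90)
notation fps_nth (infixl "$" 75)

section \<open>Coefficientwise order on formal power series\<close>

definition coeff_le :: "'a::linordered_semidom fps \<Rightarrow> 'a fps \<Rightarrow> bool" where
  "coeff_le f g \<longleftrightarrow> (\<forall>k. f $ k \<le> g $ k)"

definition coeff_nonneg :: "'a::linordered_semidom fps \<Rightarrow> bool" where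
  "coeff_nonneg f \<longleftrightarrow> (\<forall>k. 0 \<le> f $ k)"

lemma coeff_le_refl: "coeff_le f f"
  by (simp add: coeff_le_def)

lemma coeff_le_trans [trans]: "coeff_le f g \<Longrightarrow> coeff_le g h \<Longrightarrow> coeff_le f h"
  unfolding coeff_le_def by (meson order_trans)

lemma coeff_nonneg_mult: "coeff_nonneg f \<Longrightarrow> coeff_nonneg g \<Longrightarrow> coeff_nonneg (f * g)"
  unfolding coeff_nonneg_def fps_mult_nth by (auto intro!: sum_nonneg)

lemma coeff_nonneg_prod:
  "(\<And>i. i \<in> I \<Longrightarrow> coeff_nonneg (f i)) \<Longrightarrow> coeff_nonneg (\<Prod>i\<in>I. f i)"
  by (induction I rule: infinite_finite_induct)
     (simp_all add: coeff_nonneg_def coeff_nonneg_mult[unfolded coeff_nonneg_def])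

lemma coeff_le_mult:
  assumes "coeff_le f1 g1" "coeff_le f2 g2" "coeff_nonneg f1" "coeff_nonneg f2"
  shows "coeff_le (f1 * f2) (g1 * g2)"
  unfolding coeff_le_def fps_mult_nth
proof (intro allI sum_mono)
  fix k i
  have "0 \<le> g1 $ i" using assms(1,3) unfolding coeff_le_def coeff_nonneg_def
    by (meson order_trans)
  then show "f1 $ i * f2 $ (k - i) \<le> g1 $ i * g2 $ (k - i)"
    using assms unfolding coeff_le_def coeff_nonneg_def by (intro mult_mono) auto
qed

lemma coeff_le_power:
  assumes "coeff_le f g" "coeff_nonneg f"
  shows "coeff_le (f ^ m) (g ^ m)"
proof (induction m)
  case 0 show ?case by (simp add: coeff_le_refl)
next
  case (Suc m)
  have "coeff_nonneg (f ^ m)"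
    using coeff_nonneg_prod[of "{..<m}" "\<lambda>_. f"] assms(2) by simp
  then show ?case using Suc assms by (simp add: coeff_le_mult)
qed

lemma fps_prod_nth_0: "(\<Prod>i\<in>I. f i :: 'a::comm_semiring_1 fps) $ 0 = (\<Prod>i\<in>I. f i $ 0)"
  by (induction I rule: infinite_finite_induct) auto

lemma fps_deriv_prod:
  fixes f :: "'b \<Rightarrow> 'a::comm_ring_1 fps"
  assumes "finite S"
  shows "fps_deriv (\<Prod>i\<in>S. f i) = (\<Sum>i\<in>S. fps_deriv (f i) * (\<Prod>j\<in>S - {i}. f j))"
  using assms
proof (induction S rule: finite_induct)
  case empty then show ?case by simp
next
  case (insert a S)
  have rest: "(\<Prod>j\<in>insert a S - {i}. f j) = f a * (\<Prod>j\<in>S - {i}. f j)" if "i \<in> S" for i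
    using insert that by (auto simp: insert_Diff_if)
  have "fps_deriv (\<Prod>i\<in>insert a S. f i)
      = fps_deriv (f a) * (\<Prod>j\<in>S. f j) + f a * (\<Sum>i\<in>S. fps_deriv (f i) * (\<Prod>j\<in>S - {i}. f j))"
    using insert by (simp add: algebra_simps)
  also have "\<dots> = fps_deriv (f a) * (\<Prod>j\<in>insert a S - {a}. f j)
                 + (\<Sum>i\<in>S. fps_deriv (f i) * (\<Prod>j\<in>insert a S - {i}. f j))"
    using insert by (simp add: sum_distrib_left rest algebra_simps cong: sum.cong)
  finally show ?case using insert by simp
qed

definition fps_expm1 :: "'a::field \<Rightarrow> 'a fps" where
  "fps_expm1 a = fps_exp a - 1"

lemma fps_expm1_nth: "fps_expm1 a $ k = (if k = 0 then 0 else a ^ k / fact k)"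
  by (simp add: fps_expm1_def)

lemma coeff_nonneg_fps_exp: "0 \<le> (a::'a::linordered_field) \<Longrightarrow> coeff_nonneg (fps_exp a)"
  by (simp add: coeff_nonneg_def)

lemma coeff_nonneg_fps_expm1: "0 \<le> (a::'a::linordered_field) \<Longrightarrow> coeff_nonneg (fps_expm1 a)"
  by (simp add: coeff_nonneg_def fps_expm1_nth)

lemma power_increment_mono:
  fixes x y d :: "'a::linordered_idom"
  assumes "0 \<le> x" "x \<le> y" "0 \<le> d"
  shows "0 \<le> (x + d) ^ m - x ^ m \<and> (x + d) ^ m - x ^ m \<le> (y + d) ^ m - y ^ m"
proof (induction m)
  case 0 then show ?case by simp
next
  case (Suc m)
  have step: "(z + d) ^ Suc m - z ^ Suc m = (z + d) * ((z + d) ^ m - z ^ m) + d * z ^ m" for z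
    by (simp add: algebra_simps)
  have "(x + d) * ((x + d) ^ m - x ^ m) \<le> (y + d) * ((y + d) ^ m - y ^ m)"
    using Suc assms by (intro mult_mono) auto
  moreover have "d * x ^ m \<le> d * y ^ m"
    using assms by (intro mult_left_mono power_mono) auto
  moreover have "0 \<le> (x + d) * ((x + d) ^ m - x ^ m) + d * x ^ m"
    using Suc assms by auto
  ultimately show ?case unfolding step by linarith
qed

text \<open>Since the product equals
  e^{(a+b)x} - e^{ax} - e^{bx} + 1, this amounts to w^m + (a+b-w)^m \<le> a^m + b^m.\<close>
lemma fps_expm1_pair_smoothing:
  fixes a b w :: "'a::linordered_field"
  assumes "0 \<le> a" "a \<le> w" "w \<le> b"
  shows "coeff_le (fps_expm1 a * fps_expm1 b) (fps_expm1 w * fps_expm1 (a + b - w))"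
proof -
  have expand: "fps_expm1 x * fps_expm1 y = fps_exp (x + y) - fps_exp x - fps_exp y + 1" for x y :: 'a
    by (simp add: fps_expm1_def fps_exp_add_mult algebra_simps)
  have "w ^ m + (a + b - w) ^ m \<le> a ^ m + b ^ m" for m
    using power_increment_mono[of a "a + b - w" "w - a" m] assms by simp
  then have coeffs: "w ^ m / fact m + (a + b - w) ^ m / fact m \<le> a ^ m / fact m + b ^ m / fact m" for m
    by (simp add: add_divide_distrib[symmetric] divide_right_mono)
  show ?thesis unfolding coeff_le_def expand
  proof
    fix k show "(fps_exp (a + b) - fps_exp a - fps_exp b + 1) $ k
        \<le> (fps_exp (w + (a + b - w)) - fps_exp w - fps_exp (a + b - w) + 1) $ k"
      using coeffs[of k] by auto
  qed
qed

text \<open>Padding: e^{cx}(e^{ax}-1) = e^{(a+c)x} - e^{cx} \<le> e^{(a+c)x} - 1 coefficientwise.\<close>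
lemma fps_exp_mult_expm1_le:
  fixes a c :: "'a::linordered_field"
  assumes "0 \<le> c"
  shows "coeff_le (fps_exp c * fps_expm1 a) (fps_expm1 (a + c))"
proof -
  have "fps_exp c * fps_expm1 a = fps_exp (a + c) - fps_exp c"
    by (simp add: fps_expm1_def fps_exp_add_mult algebra_simps)
  then show ?thesis
    using assms unfolding coeff_le_def by (auto simp: fps_expm1_nth)
qed

section \<open>Equalising the arguments of a product of e^{ax} - 1\<close>

lemma exists_le_average:
  fixes p :: "'b \<Rightarrow> 'a::linordered_field"
  assumes "finite I" "I \<noteq> {}" "sum p I \<le> of_nat (card I) * w"
  obtains i where "i \<in> I" "p i \<le> w"
proof (rule ccontr)
  assume "\<not> thesis"
  then have "sum (\<lambda>_. w) I < sum p I"
    using that assms(1,2) by (intro sum_strict_mono) force+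
  then show False using assms(3) by simp
qed

lemma exists_ge_average:
  fixes p :: "'b \<Rightarrow> 'a::linordered_field"
  assumes "finite I" "I \<noteq> {}" "of_nat (card I) * w \<le> sum p I"
  obtains i where "i \<in> I" "w \<le> p i"
proof (rule ccontr)
  assume "\<not> thesis"
  then have "sum p I < sum (\<lambda>_. w) I"
    using that assms(1,2) by (intro sum_strict_mono) force+
  then show False using assms(3) by simp
qed

lemma fps_expm1_prod_smoothing_step:
  fixes p :: "'b \<Rightarrow> 'a::linordered_field"
  assumes "finite I" "i \<in> I" "j \<in> I" "i \<noteq> j" "\<forall>x\<in>I. 0 \<le> p x" "p i \<le> w" "w \<le> p j"
  shows "coeff_le (\<Prod>x\<in>I. fps_expm1 (p x))
           (fps_expm1 w * (\<Prod>x\<in>I - {i}. fps_expm1 ((p(j := p i + p j - w)) x)))"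
proof -
  define K where "K = I - {i} - {j}"
  define P where "P = (\<Prod>x\<in>K. fps_expm1 (p x))"
  have split_I: "(\<Prod>x\<in>I. fps_expm1 (p x)) = fps_expm1 (p i) * fps_expm1 (p j) * P"
    using assms(1-4) unfolding P_def K_def
    by (simp add: prod.remove[of I i] prod.remove[of "I - {i}" j] mult.assoc)
  have "(\<Prod>x\<in>K. fps_expm1 ((p(j := p i + p j - w)) x)) = P"
    unfolding P_def K_def by (intro prod.cong) auto
  then have split_rest: "(\<Prod>x\<in>I - {i}. fps_expm1 ((p(j := p i + p j - w)) x))
      = fps_expm1 (p i + p j - w) * P"
    using assms(1-4) unfolding K_def by (simp add: prod.remove[of "I - {i}" j])
  have "coeff_nonneg P" "coeff_nonneg (fps_expm1 (p i) * fps_expm1 (p j))"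
    using assms(2,3,5) unfolding P_def K_def
    by (auto intro!: coeff_nonneg_prod coeff_nonneg_mult coeff_nonneg_fps_expm1)
  then have "coeff_le (fps_expm1 (p i) * fps_expm1 (p j) * P) (fps_expm1 w * fps_expm1 (p i + p j - w) * P)"
    using fps_expm1_pair_smoothing[of "p i" w "p j"] assms(2,5-7)
    by (intro coeff_le_mult[OF _ coeff_le_refl]) auto
  then show ?thesis unfolding split_I split_rest by (simp add: mult.assoc)
qed

lemma fps_expm1_prod_le_equal:
  fixes p :: "'b \<Rightarrow> 'a::linordered_field"
  assumes "finite I" "\<forall>i\<in>I. 0 \<le> p i" "sum p I = of_nat (card I) * w"
  shows "coeff_le (\<Prod>i\<in>I. fps_expm1 (p i)) (fps_expm1 w ^ card I)"
  using assms
proof (induction "card I" arbitrary: I p)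
  case 0 then show ?case by (simp add: coeff_le_refl)
next
  case (Suc m)
  have "I \<noteq> {}" using Suc.hyps(2) by auto
  then obtain i where i: "i \<in> I" "p i \<le> w"
    using exists_le_average[OF Suc.prems(1) _ Suc.prems(3)[THEN eq_refl]] by blast
  define J where "J = I - {i}"
  have J: "finite J" "card J = m" "sum p I = p i + sum p J"
    using Suc.prems(1) Suc.hyps(2) i(1) unfolding J_def by (auto simp: sum.remove)
  show ?case
  proof (cases "J = {}")
    case True
    then have "I = {i}" using i(1) unfolding J_def by auto
    then show ?thesis using Suc.prems(3) by (simp add: coeff_le_refl)
  next
    case False
    have "of_nat m * w \<le> sum p J"
      using J Suc.prems(3) i(2) by (simp add: Suc.hyps(2)[symmetric] algebra_simps)
    then obtain j where j: "j \<in> J" "w \<le> p j"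
      using exists_ge_average[OF J(1) False] J(2) by blast
    define p' where "p' = p(j := p i + p j - w)"
    have "sum p' J = p' j + sum p' (J - {j})" "sum p J = p j + sum p (J - {j})"
      using J(1) j(1) by (simp_all add: sum.remove)
    moreover have "sum p' (J - {j}) = sum p (J - {j})"
      unfolding p'_def by (intro sum.cong) auto
    ultimately have "sum p' J = of_nat (card J) * w"
      using J Suc.prems(3) by (simp add: Suc.hyps(2)[symmetric] p'_def algebra_simps)
    moreover have nn': "\<forall>x\<in>J. 0 \<le> p' x"
      using Suc.prems(2) i j unfolding p'_def J_def by auto
    ultimately have IH: "coeff_le (\<Prod>x\<in>J. fps_expm1 (p' x)) (fps_expm1 w ^ m)"
      using Suc.hyps(1) J by metis
    have "coeff_le (\<Prod>x\<in>I. fps_expm1 (p x)) (fps_expm1 w * (\<Prod>x\<in>J. fps_expm1 (p' x)))"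
      using fps_expm1_prod_smoothing_step[OF Suc.prems(1) i(1) _ _ Suc.prems(2) i(2) j(2)] j(1)
      unfolding J_def p'_def by auto
    also have "coeff_le \<dots> (fps_expm1 w * fps_expm1 w ^ m)"
      using IH nn' i j Suc.prems(2)
      by (intro coeff_le_mult coeff_le_refl coeff_nonneg_prod coeff_nonneg_fps_expm1) (auto simp: J_def)
    finally show ?thesis by (simp add: Suc.hyps(2)[symmetric])
  qed
qed

section \<open>Generating function of the covering probability\<close>

text \<open>For weights q on a finite set U and R \<subseteq> U this is
  e^{q(U-R) x} \<Prod>_{r\<in>R} (e^{q_r x} - 1), written as a product over all of U.\<close>
definition cover_egf :: "('a \<Rightarrow> real) \<Rightarrow> 'a set \<Rightarrow> 'a set \<Rightarrow> real fps" where
  "cover_egf q U R = (\<Prod>x\<in>U. if x \<in> R then fps_expm1 (q x) else fps_exp (q x))"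

lemma cover_egf_nth_0:
  assumes "finite U" "R \<subseteq> U"
  shows "cover_egf q U R $ 0 = (if R = {} then 1 else 0)"
proof -
  have "cover_egf q U R $ 0 = (\<Prod>x\<in>U. if x \<in> R then 0 else 1)"
    unfolding cover_egf_def fps_prod_nth_0 by (intro prod.cong) (auto simp: fps_expm1_nth)
  then show ?thesis using assms by (cases "R = {}") (auto simp: prod_zero_iff)
qed

text \<open>Differentiating removes one coupon from the set still to be covered: this is
  the generating-function form of conditioning on the first draw.\<close>
lemma cover_egf_deriv:
  assumes "finite U"
  shows "fps_deriv (cover_egf q U R) = (\<Sum>x\<in>U. fps_const (q x) * cover_egf q U (R - {x}))"
proof -
  define g where "g R' x = (if x \<in> R' then fps_expm1 (q x) else fps_exp (q x))" for R' x
  have egf: "cover_egf q U R' = (\<Prod>x\<in>U. g R' x)" for R'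
    unfolding cover_egf_def g_def ..
  have summand: "fps_deriv (g R x) * (\<Prod>y\<in>U - {x}. g R y) = fps_const (q x) * cover_egf q U (R - {x})"
    if "x \<in> U" for x
  proof -
    have "(\<Prod>y\<in>U - {x}. g R y) = (\<Prod>y\<in>U - {x}. g (R - {x}) y)"
      by (intro prod.cong) (auto simp: g_def)
    moreover have "cover_egf q U (R - {x}) = fps_exp (q x) * (\<Prod>y\<in>U - {x}. g (R - {x}) y)"
      using assms that unfolding egf by (simp add: prod.remove g_def)
    moreover have "fps_deriv (g R x) = fps_const (q x) * fps_exp (q x)"
      by (simp add: g_def fps_expm1_def)
    ultimately show ?thesis by (simp add: mult.assoc)
  qed
  have "fps_deriv (cover_egf q U R) = (\<Sum>x\<in>U. fps_deriv (g R x) * (\<Prod>y\<in>U - {x}. g R y))"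
    unfolding egf by (rule fps_deriv_prod[OF assms])
  also have "\<dots> = (\<Sum>x\<in>U. fps_const (q x) * cover_egf q U (R - {x}))"
    by (rule sum.cong[OF refl]) (rule summand)
  finally show ?thesis .
qed

lemma cover_egf_nth_Suc:
  assumes "finite U"
  shows "fact (Suc k) * cover_egf q U R $ Suc k
       = (\<Sum>x\<in>U. q x * (fact k * cover_egf q U (R - {x}) $ k))"
proof -
  have "fact (Suc k) * cover_egf q U R $ Suc k = fact k * fps_deriv (cover_egf q U R) $ k"
    by (simp add: algebra_simps)
  also have "\<dots> = (\<Sum>x\<in>U. q x * (fact k * cover_egf q U (R - {x}) $ k))"
    unfolding cover_egf_deriv[OF assms] fps_sum_nth by (simp add: sum_distrib_left algebra_simps)
  finally show ?thesis .
qed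

section \<open>Probability that independent draws cover a set\<close>

definition cover_prob :: "'a::countable pmf \<Rightarrow> nat \<Rightarrow> 'a set \<Rightarrow> real" where
  "cover_prob M k R = measure (stream_space (measure_pmf M))
     {\<omega>\<in>space (stream_space (measure_pmf M)). R \<subseteq> set (stake k \<omega>)}"

lemma measurable_cover_event [measurable]:
  fixes M :: "'a::countable pmf"
  shows "Measurable.pred (stream_space (measure_pmf M)) (\<lambda>\<omega>. R \<subseteq> set (stake k \<omega>))"
proof -
  have "sets (stream_space (measure_pmf M)) = sets (stream_space (count_space UNIV))"
    by (intro sets_stream_space_cong) simp
  then have stake: "stake k \<in> measurable (stream_space (measure_pmf M)) (count_space UNIV)"
    using measurable_stake[of k] by (simp add: measurable_def space_stream_space)
  show ?thesis
    using measurable_compose[OF stake, of "\<lambda>l. R \<subseteq> set l"] by (simp add: o_def)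
qed

lemma prob_space_stream_pmf: "prob_space (stream_space (measure_pmf M))"
  by (rule prob_space.prob_space_stream_space[OF measure_pmf.prob_space_axioms])

lemma cover_prob_0: "cover_prob M 0 R = (if R = {} then 1 else 0)"
  using prob_space.prob_space[OF prob_space_stream_pmf[of M]] by (simp add: cover_prob_def)

text \<open>First-step decomposition: after the first draw x the remaining k draws
  must cover R - {x}.\<close>
lemma cover_prob_Suc:
  assumes "finite U" "set_pmf M \<subseteq> U"
  shows "cover_prob M (Suc k) R = (\<Sum>x\<in>U. pmf M x * cover_prob M k (R - {x}))"
proof -
  have ev: "{\<omega>\<in>space (stream_space (measure_pmf M)). R \<subseteq> set (stake (Suc k) \<omega>)}
      \<in> sets (stream_space (measure_pmf M))"
    by measurable
  have "ennreal (cover_prob M (Suc k) R) = (\<integral>\<^sup>+x. ennreal (cover_prob M k (R - {x})) \<partial>measure_pmf M)"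
    unfolding cover_prob_def
    by (subst prob_space.prob_stream_space[OF measure_pmf.prob_space_axioms ev])
       (auto intro!: nn_integral_cong arg_cong[where f = ennreal] arg_cong[where f = "measure _"])
  also have "\<dots> = (\<Sum>x\<in>U. ennreal (cover_prob M k (R - {x})) * pmf M x)"
    using assms by (intro nn_integral_measure_pmf_support) auto
  also have "\<dots> = ennreal (\<Sum>x\<in>U. pmf M x * cover_prob M k (R - {x}))"
    by (subst sum_ennreal[symmetric]) (auto simp: cover_prob_def ennreal_mult'' mult.commute)
  finally show ?thesis
    by (subst (asm) ennreal_inj) (auto simp: cover_prob_def intro!: sum_nonneg)
qed

text \<open>Both sides satisfy the same recursion in k, hence the covering probability
  is read off from the exponential generating function.\<close>
lemma cover_prob_eq_egf:
  assumes "finite U" "set_pmf M \<subseteq> U" "R \<subseteq> U"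
  shows "cover_prob M k R = fact k * cover_egf (pmf M) U R $ k"
  using assms(3)
proof (induction k arbitrary: R)
  case 0
  then show ?case using assms(1) by (simp add: cover_prob_0 cover_egf_nth_0)
next
  case (Suc k)
  have "cover_prob M (Suc k) R = (\<Sum>x\<in>U. pmf M x * cover_prob M k (R - {x}))"
    using assms(1,2) by (rule cover_prob_Suc)
  also have "\<dots> = (\<Sum>x\<in>U. pmf M x * (fact k * cover_egf (pmf M) U (R - {x}) $ k))"
  proof (rule sum.cong[OF refl])
    fix x assume "x \<in> U"
    have "R - {x} \<subseteq> U" using Suc.prems by auto
    then show "pmf M x * cover_prob M k (R - {x}) = pmf M x * (fact k * cover_egf (pmf M) U (R - {x}) $ k)"
      using Suc.IH by simp
  qed
  also have "\<dots> = fact (Suc k) * cover_egf (pmf M) U R $ Suc k"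
    using cover_egf_nth_Suc[OF assms(1)] by simp
  finally show ?case .
qed

section \<open>The coupon collector\<close>

lemma pmf_coupon_pmf:
  assumes "\<forall>i\<in>{1..n}. 0 \<le> q i" "sum q {1..n} \<le> 1"
  shows "pmf (coupon_pmf n q) x = coupon_weight n q x"
proof -
  have nn: "0 \<le> coupon_weight n q y" for y
    using assms by (auto simp: coupon_weight_def)
  have "(\<Sum>y\<in>{0..n}. coupon_weight n q y) = coupon_weight n q 0 + (\<Sum>y\<in>{1..n}. coupon_weight n q y)"
    by (simp add: sum.atLeast_Suc_atMost)
  also have "(\<Sum>y\<in>{1..n}. coupon_weight n q y) = sum q {1..n}"
    by (intro sum.cong) (auto simp: coupon_weight_def)
  finally have total: "(\<Sum>y\<in>{0..n}. coupon_weight n q y) = 1"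
    by (simp add: coupon_weight_def)
  have "(\<integral>\<^sup>+y. ennreal (coupon_weight n q y) \<partial>count_space UNIV) = (\<Sum>y\<in>{0..n}. ennreal (coupon_weight n q y))"
    by (rule nn_integral_count_space') (auto simp: coupon_weight_def)
  also have "\<dots> = 1"
    using nn total by (simp add: sum_ennreal)
  finally show ?thesis
    unfolding coupon_pmf_def using nn by (subst pmf_embed_pmf) auto
qed

lemma T_nn_gt_iff: "T_nn n \<omega> > enat k \<longleftrightarrow> \<not> {1..n} \<subseteq> set (stake k \<omega>)"
proof -
  have mono: "set (stake t \<omega>) \<subseteq> set (stake t' \<omega>)" if "t \<le> t'" for t t'
    using that set_take_subset[of t "stake t' \<omega>"] by (simp add: take_stake min_def)
  show ?thesis
  proof (cases "\<exists>t. {1..n} \<subseteq> set (stake t \<omega>)")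
    case True
    define L where "L = (LEAST t. {1..n} \<subseteq> set (stake t \<omega>))"
    have "{1..n} \<subseteq> set (stake L \<omega>)"
      unfolding L_def using True by (metis LeastI)
    then have "{1..n} \<subseteq> set (stake k \<omega>) \<longleftrightarrow> L \<le> k"
      using mono[of L k] Least_le[of "\<lambda>t. {1..n} \<subseteq> set (stake t \<omega>)" k] unfolding L_def by auto
    then show ?thesis using True unfolding T_nn_def L_def[symmetric] by auto
  next
    case False
    then show ?thesis unfolding T_nn_def by auto
  qed
qed

definition coupon_egf :: "nat \<Rightarrow> (nat \<Rightarrow> real) \<Rightarrow> real fps" where
  "coupon_egf n q = fps_exp (1 - sum q {1..n}) * (\<Prod>i\<in>{1..n}. fps_expm1 (q i))"

lemma coupon_tail_eq_egf:
  assumes "\<forall>i\<in>{1..n}. 0 \<le> q i" "sum q {1..n} \<le> 1"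
  shows "measure (draws n q) {\<omega>\<in>space (draws n q). T_nn n \<omega> > enat k} = 1 - fact k * coupon_egf n q $ k"
proof -
  let ?M = "coupon_pmf n q"
  let ?S = "stream_space (measure_pmf ?M)"
  have pmf: "pmf ?M = coupon_weight n q"
    using pmf_coupon_pmf[OF assms] by auto
  have support: "set_pmf ?M \<subseteq> {0..n}"
    by (auto simp: set_pmf_iff pmf coupon_weight_def split: if_splits)
  have "{\<omega>\<in>space (draws n q). T_nn n \<omega> > enat k}
      = space ?S - {\<omega>\<in>space ?S. {1..n} \<subseteq> set (stake k \<omega>)}"
    unfolding draws_def T_nn_gt_iff by auto
  then have "measure (draws n q) {\<omega>\<in>space (draws n q). T_nn n \<omega> > enat k} = 1 - cover_prob ?M k {1..n}"
    unfolding cover_prob_def draws_def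
    by (simp add: prob_space.prob_compl[OF prob_space_stream_pmf])
  also have "cover_prob ?M k {1..n} = fact k * cover_egf (coupon_weight n q) {0..n} {1..n} $ k"
    using cover_prob_eq_egf[OF _ support] pmf by simp
  also have "cover_egf (coupon_weight n q) {0..n} {1..n} = coupon_egf n q"
  proof -
    have "{0..n} = insert 0 {1..n}" by auto
    moreover have "(\<Prod>i\<in>{1..n}. if i \<in> {1..n} then fps_expm1 (coupon_weight n q i) else fps_exp (coupon_weight n q i))
        = (\<Prod>i\<in>{1..n}. fps_expm1 (q i))"
      by (intro prod.cong) (auto simp: coupon_weight_def)
    ultimately show ?thesis
      unfolding cover_egf_def coupon_egf_def by (simp add: coupon_weight_def)
  qed
  finally show ?thesis .
qed

lemma coupon_tail_mono:
  assumes "\<forall>i\<in>{1..n}. 0 \<le> q i" "sum q {1..n} \<le> 1"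
    and "\<forall>i\<in>{1..n}. 0 \<le> q' i" "sum q' {1..n} \<le> 1"
    and "coeff_le (coupon_egf n q) (coupon_egf n q')"
  shows "measure (draws n q') {\<omega>\<in>space (draws n q'). T_nn n \<omega> > enat k}
       \<le> measure (draws n q) {\<omega>\<in>space (draws n q). T_nn n \<omega> > enat k}"
  using assms(5) unfolding coupon_tail_eq_egf[OF assms(1,2)] coupon_tail_eq_egf[OF assms(3,4)] coeff_le_def
  by (simp add: mult_left_mono)

lemma coupon_egf_equalize:
  assumes "n \<ge> 1" "\<forall>i\<in>{1..n}. 0 \<le> q i" "sum q {1..n} \<le> 1"
  shows "coeff_le (coupon_egf n q) (coupon_egf n (\<lambda>_. sum q {1..n} / n))"
proof -
  define s where "s = sum q {1..n}"
  have "sum (\<lambda>_. s / n) {1..n} = s" using assms(1) by simp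
  then have equal: "coupon_egf n (\<lambda>_. s / n) = fps_exp (1 - s) * fps_expm1 (s / n) ^ n"
    by (simp add: coupon_egf_def)
  have "coeff_le (\<Prod>i\<in>{1..n}. fps_expm1 (q i)) (fps_expm1 (s / n) ^ n)"
    using fps_expm1_prod_le_equal[of "{1..n}" q "s / n"] assms by (simp add: s_def)
  then have "coeff_le (fps_exp (1 - s) * (\<Prod>i\<in>{1..n}. fps_expm1 (q i)))
                      (fps_exp (1 - s) * fps_expm1 (s / n) ^ n)"
    using assms(2,3) unfolding s_def
    by (intro coeff_le_mult[OF coeff_le_refl])
       (auto intro!: coeff_nonneg_fps_exp coeff_nonneg_prod coeff_nonneg_fps_expm1)
  then show ?thesis unfolding s_def[symmetric] equal coupon_egf_def[of n q] .
qed

lemma coupon_egf_fill: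
  assumes "n \<ge> 1" "0 \<le> s" "s \<le> 1"
  shows "coeff_le (coupon_egf n (\<lambda>_. s / n)) (coupon_egf n (\<lambda>_. 1 / n))"
proof -
  define c where "c = (1 - s) / n"
  have c: "0 \<le> c" "s / n + c = 1 / n" "n * c = 1 - s"
    using assms by (auto simp: c_def add_divide_distrib[symmetric])
  have "coupon_egf n (\<lambda>_. s / n) = (fps_exp c * fps_expm1 (s / n)) ^ n"
    using assms(1) c(3) by (simp add: coupon_egf_def power_mult_distrib fps_exp_power_mult)
  moreover have "coupon_egf n (\<lambda>_. 1 / n) = fps_expm1 (s / n + c) ^ n"
    using assms(1) c(2) by (simp add: coupon_egf_def)
  moreover have "coeff_le (fps_exp c * fps_expm1 (s / n)) (fps_expm1 (s / n + c))"
    using c(1) by (rule fps_exp_mult_expm1_le)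
  moreover have "coeff_nonneg (fps_exp c * fps_expm1 (s / n))"
    using assms c(1) by (intro coeff_nonneg_mult coeff_nonneg_fps_exp coeff_nonneg_fps_expm1) auto
  ultimately show ?thesis by (simp add: coeff_le_power)
qed

theorem theorem4:
  fixes n k :: nat and p :: "nat \<Rightarrow> real"
  assumes "n \<ge> 1"
    and "\<forall>i\<in>{1..n}. 0 < p i \<and> p i < 1"
    and "(\<Sum>i\<in>{1..n}. p i) \<le> 1"
  defines "p0 \<equiv> 1 - (\<Sum>i\<in>{1..n}. p i)"
  defines "v \<equiv> (\<lambda>i::nat. (1 - p0) / real n)"
  defines "u \<equiv> (\<lambda>i::nat. 1 / real n)"
  shows "measure (draws n p) {\<omega>\<in>space (draws n p). T_nn n \<omega> > enat k}
           \<ge> measure (draws n v) {\<omega>\<in>space (draws n v). T_nn n \<omega> > enat k}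
       \<and> measure (draws n v) {\<omega>\<in>space (draws n v). T_nn n \<omega> > enat k}
           \<ge> measure (draws n u) {\<omega>\<in>space (draws n u). T_nn n \<omega> > enat k}"
proof -
  define s where "s = (\<Sum>i\<in>{1..n}. p i)"
  have p: "\<forall>i\<in>{1..n}. 0 \<le> p i" using assms(2) by auto
  have s: "0 \<le> s" "s \<le> 1" using p assms(3) by (auto simp: s_def intro: sum_nonneg)
  have v_eq: "v = (\<lambda>_. s / real n)" unfolding v_def p0_def s_def by simp
  have v: "\<forall>i\<in>{1..n}. 0 \<le> v i" "sum v {1..n} \<le> 1" using s assms(1) by (auto simp: v_eq)
  have u: "\<forall>i\<in>{1..n}. 0 \<le> u i" "sum u {1..n} \<le> 1" using assms(1) by (auto simp: u_def)
  have "coeff_le (coupon_egf n p) (coupon_egf n v)"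
    using coupon_egf_equalize[OF assms(1) p assms(3)] by (simp add: v_eq s_def)
  moreover have "coeff_le (coupon_egf n v) (coupon_egf n u)"
    using coupon_egf_fill[OF assms(1) s] by (simp add: v_eq u_def)
  ultimately show ?thesis using coupon_tail_mono p assms(3) v u by blast
qed

end
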